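(* Let $G$ be a totally disconnected locally compact group. Then $C_c^\infty(G)=\mathcal P(G)$.
   Context: $C_c^\infty(G)$ (the smooth functions) is the linear span of the characteristic functions $\chi_{xH}$ with $x\in G$ and $H$ a compact open subgroup of $G$; equivalently the union over compact open subgroups $H$ of the compactly supported continuous functions constant on the cosets $xH$. $\mathcal P(G)$ is the set of $f\in C_c(G)$ such that for some compact open subgroup $H$ of $G$ there exist finitely many $f_i\in C_c(G)$ and $\phi_i\in C(H)$ with $f(xh)=\sum_i f_i(x)\phi_i(h)$ for all $x\in G,h\in H$. *)

theory Defs
  imports "HOL-Analysis.Analysis" "HOL-Algebra.Algebra"
begin

definition topological_group :: "('a, 'b) monoid_scheme \<Rightarrow> 'a topology \<Rightarrow> bool" where
  "topological_group G T \<longleftrightarrow> group G \<and> topspace T = carrier G \<and>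
     continuous_map (prod_topology T T) T (\<lambda>p. fst p \<otimes>\<^bsub>G\<^esub> snd p) \<and>
     continuous_map T T (\<lambda>x. inv\<^bsub>G\<^esub> x)"

definition locally_compact_group :: "('a, 'b) monoid_scheme \<Rightarrow> 'a topology \<Rightarrow> bool" where
  "locally_compact_group G T \<longleftrightarrow> topological_group G T \<and> Hausdorff_space T \<and>
     locally_compact_space T"

definition totally_disconnected_space :: "'a topology \<Rightarrow> bool" where
  "totally_disconnected_space T \<longleftrightarrow> (\<forall>S. connectedin T S \<longrightarrow> (\<exists>a. S \<subseteq> {a}))"

definition compact_open_subgroup :: "('a, 'b) monoid_scheme \<Rightarrow> 'a topology \<Rightarrow> 'a set \<Rightarrow> bool" where
  "compact_open_subgroup G T H \<longleftrightarrow> subgroup H G \<and> openin T H \<and> compactin T H"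

definition Cc :: "'a topology \<Rightarrow> ('a \<Rightarrow> complex) set" where
  "Cc T = {f. continuous_map T euclidean f \<and>
              compactin T (T closure_of {x \<in> topspace T. f x \<noteq> 0}) \<and>
              (\<forall>x. x \<notin> topspace T \<longrightarrow> f x = 0)}"

text \<open>C_c^\<infinity>(G): the complex linear span of the characteristic functions of cosets xH,
  x in G, H a compact open subgroup.\<close>
definition smooth_functions :: "('a, 'b) monoid_scheme \<Rightarrow> 'a topology \<Rightarrow> ('a \<Rightarrow> complex) set" where
  "smooth_functions G T = {f. \<exists>(n::nat) (c::nat \<Rightarrow> complex) (x::nat \<Rightarrow> 'a) (H::nat \<Rightarrow> 'a set).
      (\<forall>i<n. x i \<in> carrier G \<and> compact_open_subgroup G T (H i)) \<and>
      f = (\<lambda>g. \<Sum>i<n. c i * indicator (x i <#\<^bsub>G\<^esub> H i) g)}"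

definition P_functions :: "('a, 'b) monoid_scheme \<Rightarrow> 'a topology \<Rightarrow> ('a \<Rightarrow> complex) set" where
  "P_functions G T = {f. f \<in> Cc T \<and> (\<exists>H. compact_open_subgroup G T H \<and>
      (\<exists>(n::nat) (fs::nat \<Rightarrow> 'a \<Rightarrow> complex) (\<phi>::nat \<Rightarrow> 'a \<Rightarrow> complex).
         (\<forall>i<n. fs i \<in> Cc T \<and> continuous_map (subtopology T H) euclidean (\<phi> i)) \<and>
         (\<forall>x\<in>carrier G. \<forall>h\<in>H. f (x \<otimes>\<^bsub>G\<^esub> h) = (\<Sum>i<n. fs i x * \<phi> i h))))}"

end

(* Smooth functions are right-invariant under the intersection of the finitely many compact open
   subgroups occurring in them, so they are in P(G) with a single product term.

   Conversely, let f(xh) = sum_i f_i(x) phi_i(h) for x in G, h in H. All functions h |-> f(xh)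
   lie in the finite-dimensional space V spanned by the phi_i on H, and V contains their left
   translates by H. Finitely many points P of H give a norm on V that controls coefficients, so
   by continuity of the phi_i and van Dantzig's theorem there is a compact open subgroup K such that
   translation by any k in K moves every v in V by at most a quarter of its norm. Replacing k by
   k^2, k^4, ... the displacement of v grows by a factor 7/4 at each step while staying bounded,
   hence it is zero (the argument behind "GL_n has no small subgroups"). Thus f is right
   K-invariant, and by compactness of its support f is a finite combination of indicators of
   cosets xK. *)

theory Submission
  imports Defs
begin

section \<open>Compact open subgroups\<close>

lemma totally_disconnected_space_subtopology:
  assumes "totally_disconnected_space T"
  shows "totally_disconnected_space (subtopology T V)"
  using assms by (simp add: totally_disconnected_space_def connectedin_subtopology)

lemma totally_disconnected_clopen_separation:
  assumes "compact_space Y" "Hausdorff_space Y" "totally_disconnected_space Y"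
    and "x \<in> topspace Y" "closedin Y S" "x \<notin> S"
  obtains A where "openin Y A" "closedin Y A" "x \<in> A" "A \<inter> S = {}"
proof -
  have "disjnt C {x} \<or> disjnt C S" if C: "connectedin Y C" for C
  proof -
    obtain a where "C \<subseteq> {a}"
      using assms(3) C unfolding totally_disconnected_space_def by blast
    then show ?thesis
      using \<open>x \<notin> S\<close> by (auto simp: disjnt_def)
  qed
  then have "separated_between Y {x} S"
    using assms by (intro cut_wire_fence_theorem_gen) (auto simp: compactin_sing)
  then obtain A B where "openin Y A" "openin Y B" "A \<union> B = topspace Y" "disjnt A B" "x \<in> A" "S \<subseteq> B"
    unfolding separated_between_def by blast
  moreover have "closedin Y (topspace Y - B)"
    using \<open>openin Y B\<close> by (intro closedin_diff closedin_topspace)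
  moreover have "A = topspace Y - B" "A \<inter> S = {}"
    using \<open>A \<union> B = topspace Y\<close> \<open>disjnt A B\<close> \<open>S \<subseteq> B\<close> by (auto simp: disjnt_def)
  ultimately show ?thesis
    using that by simp
qed

lemma totally_disconnected_compact_open_nbhd:
  assumes "Hausdorff_space T" and "locally_compact_space T"
    and "totally_disconnected_space T" and W: "openin T W" and "x \<in> W"
  obtains A where "openin T A" "compactin T A" "x \<in> A" "A \<subseteq> W"
proof -
  have "neighbourhood_base_of (compactin T) T"
    using assms locally_compact_space_neighbourhood_base by blast
  moreover have "x \<in> topspace T"
    using W \<open>x \<in> W\<close> openin_subset by blast
  ultimately obtain U V where U: "openin T U" and V: "compactin T V" and "x \<in> U" "U \<subseteq> V" "V \<subseteq> W"
    using W \<open>x \<in> W\<close> unfolding neighbourhood_base_of_def neighbourhood_base_at_def by meson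
  define Y where "Y = subtopology T V"
  have tY: "topspace Y = V"
    using V compactin_subset_topspace by (auto simp: Y_def)
  have "openin Y (U \<inter> V)"
    using U by (auto simp: Y_def openin_subtopology_Int)
  then have "closedin Y (topspace Y - (U \<inter> V))"
    by (intro closedin_diff closedin_topspace)
  moreover have "topspace Y - (U \<inter> V) = V - U"
    using tY by blast
  ultimately have "closedin Y (V - U)"
    by simp
  moreover have "compact_space Y" "Hausdorff_space Y" "totally_disconnected_space Y"
    using assms(1,3) V by (simp_all add: Y_def compact_space_subtopology Hausdorff_space_subtopology
        totally_disconnected_space_subtopology)
  moreover have "x \<in> topspace Y"
    using tY \<open>x \<in> U\<close> \<open>U \<subseteq> V\<close> by blast
  ultimately obtain A where A: "openin Y A" "closedin Y A" and "x \<in> A" "A \<inter> (V - U) = {}"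
    using totally_disconnected_clopen_separation[of Y x "V - U"] \<open>x \<in> U\<close> by auto
  then have "A \<subseteq> U"
    using A(1) tY openin_subset by blast
  obtain A' where "openin T A'" "A = A' \<inter> V"
    using A(1) unfolding Y_def openin_subtopology by blast
  then have "A = A' \<inter> U"
    using \<open>A \<subseteq> U\<close> \<open>U \<subseteq> V\<close> by blast
  then have "openin T A"
    using \<open>openin T A'\<close> U by blast
  moreover have "compactin T A"
    using A(2) V closedin_compact_space[of Y A]
    by (simp add: Y_def compact_space_subtopology compactin_subtopology)
  ultimately show ?thesis
    using that \<open>x \<in> A\<close> \<open>A \<subseteq> U\<close> \<open>U \<subseteq> V\<close> \<open>V \<subseteq> W\<close> by blast
qed

locale topgroup = group G for G (structure) +
  fixes T :: "'a topology"
  assumes topological_group: "topological_group G T"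
begin

lemma topspace_eq [simp]: "topspace T = carrier G"
  using topological_group by (simp add: topological_group_def)

lemma continuous_map_mult: "continuous_map (prod_topology T T) T (\<lambda>p. fst p \<otimes> snd p)"
  using topological_group by (simp add: topological_group_def)

lemma continuous_map_inv: "continuous_map T T (\<lambda>x. inv x)"
  using topological_group by (simp add: topological_group_def)

lemma continuous_map_mult_left:
  assumes "g \<in> carrier G"
  shows "continuous_map T T (\<lambda>y. g \<otimes> y)"
  using continuous_map_compose[OF _ continuous_map_mult, of T "\<lambda>y. (g, y)"] assms
  by (simp add: o_def continuous_map_pairedI)

lemma continuous_map_mult_right:
  assumes "g \<in> carrier G"
  shows "continuous_map T T (\<lambda>y. y \<otimes> g)"
  using continuous_map_compose[OF _ continuous_map_mult, of T "\<lambda>y. (y, g)"] assms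
  by (simp add: o_def continuous_map_pairedI)

lemma l_coset_eq_preimage:
  assumes "x \<in> carrier G" "U \<subseteq> carrier G"
  shows "x <# U = {y \<in> carrier G. inv x \<otimes> y \<in> U}"
proof
  show "x <# U \<subseteq> {y \<in> carrier G. inv x \<otimes> y \<in> U}"
    using assms by (auto simp: l_coset_def m_assoc[symmetric])
  show "{y \<in> carrier G. inv x \<otimes> y \<in> U} \<subseteq> x <# U"
  proof clarify
    fix y
    assume "y \<in> carrier G" "inv x \<otimes> y \<in> U"
    moreover have "y = x \<otimes> (inv x \<otimes> y)"
      using assms(1) \<open>y \<in> carrier G\<close> by (simp add: m_assoc[symmetric])
    ultimately show "y \<in> x <# U"
      unfolding l_coset_def by blast
  qed
qed

lemma openin_l_coset:
  assumes "x \<in> carrier G" "openin T U"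
  shows "openin T (x <# U)"
proof -
  have "openin T {y \<in> topspace T. inv x \<otimes> y \<in> U}"
    using assms by (intro openin_continuous_map_preimage[OF continuous_map_mult_left]) simp_all
  moreover have "U \<subseteq> carrier G"
    using assms(2) openin_subset by force
  ultimately show ?thesis
    using assms(1) by (simp add: l_coset_eq_preimage)
qed

lemma compactin_l_coset:
  assumes "x \<in> carrier G" "compactin T U"
  shows "compactin T (x <# U)"
proof -
  have "x <# U = (\<lambda>y. x \<otimes> y) ` U"
    unfolding l_coset_def by blast
  then show ?thesis
    using image_compactin[OF assms(2) continuous_map_mult_left[OF assms(1)]] by simp
qed

lemma subgroup_openin_if_nbhd:
  assumes K: "subgroup K G" and U: "openin T U" "\<one> \<in> U" "U \<subseteq> K"
  shows "openin T K"
proof -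
  have "K = (\<Union>k\<in>K. k <# U)"
  proof
    show "K \<subseteq> (\<Union>k\<in>K. k <# U)"
    proof
      fix k
      assume "k \<in> K"
      then have "k = k \<otimes> \<one>"
        using K subgroup.mem_carrier by force
      then show "k \<in> (\<Union>k\<in>K. k <# U)"
        using \<open>k \<in> K\<close> \<open>\<one> \<in> U\<close> unfolding l_coset_def by blast
    qed
    show "(\<Union>k\<in>K. k <# U) \<subseteq> K"
      using \<open>U \<subseteq> K\<close> subgroup.m_closed[OF K] unfolding l_coset_def by blast
  qed
  moreover have "openin T (\<Union>k\<in>K. k <# U)"
    using U K by (intro openin_Union) (auto intro: openin_l_coset subgroup.mem_carrier)
  ultimately show ?thesis
    by simp
qed

lemma open_subgroup_closedin:
  assumes K: "subgroup K G" and "openin T K"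
  shows "closedin T K"
proof -
  have "carrier G - K = (\<Union>x\<in>carrier G - K. x <# K)"
  proof
    show "carrier G - K \<subseteq> (\<Union>x\<in>carrier G - K. x <# K)"
      using K lcos_self by blast
    show "(\<Union>x\<in>carrier G - K. x <# K) \<subseteq> carrier G - K"
    proof
      fix y
      assume "y \<in> (\<Union>x\<in>carrier G - K. x <# K)"
      then obtain x where x: "x \<in> carrier G" "x \<notin> K" and y: "y \<in> x <# K"
        by blast
      have "y \<notin> K"
      proof
        assume "y \<in> K"
        then have "x <# K = K"
          using K x y l_repr_independence coset_join3 subgroup.mem_carrier by metis
        then show False
          using K lcos_self x by blast
      qed
      then show "y \<in> carrier G - K"
        using K x y l_coset_carrier by blast
    qed
  qed
  moreover have "openin T (\<Union>x\<in>carrier G - K. x <# K)"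
    using assms by (intro openin_Union) (auto intro: openin_l_coset)
  ultimately have "openin T (carrier G - K)"
    by simp
  then show ?thesis
    using K subgroup.subset by (simp add: closedin_def)
qed

end

lemma (in group) subgroup_left_stabilizer:
  assumes "A \<subseteq> carrier G"
  shows "subgroup {g \<in> carrier G. \<forall>a\<in>A. g \<otimes> a \<in> A \<and> inv g \<otimes> a \<in> A} G"
proof
  show "\<one> \<in> {g \<in> carrier G. \<forall>a\<in>A. g \<otimes> a \<in> A \<and> inv g \<otimes> a \<in> A}"
    using assms by auto
next
  fix g h
  assume g: "g \<in> {g \<in> carrier G. \<forall>a\<in>A. g \<otimes> a \<in> A \<and> inv g \<otimes> a \<in> A}"
    and h: "h \<in> {g \<in> carrier G. \<forall>a\<in>A. g \<otimes> a \<in> A \<and> inv g \<otimes> a \<in> A}"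
  have "g \<otimes> h \<otimes> a \<in> A \<and> inv (g \<otimes> h) \<otimes> a \<in> A" if "a \<in> A" for a
  proof -
    have "g \<otimes> (h \<otimes> a) \<in> A" "inv h \<otimes> (inv g \<otimes> a) \<in> A"
      using g h that by auto
    moreover have "a \<in> carrier G"
      using assms that by auto
    ultimately show ?thesis
      using g h by (simp add: m_assoc inv_mult_group)
  qed
  then show "g \<otimes> h \<in> {g \<in> carrier G. \<forall>a\<in>A. g \<otimes> a \<in> A \<and> inv g \<otimes> a \<in> A}"
    using g h by auto
qed auto

context topgroup
begin

lemma nbhd_one_mult_subset:
  assumes "compactin T A" "openin T W" "A \<subseteq> W"
  obtains U where "openin T U" "\<one> \<in> U" "\<And>u a. u \<in> U \<Longrightarrow> a \<in> A \<Longrightarrow> u \<otimes> a \<in> W"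
proof -
  define M where "M = {p \<in> topspace (prod_topology T T). fst p \<otimes> snd p \<in> W}"
  have "openin (prod_topology T T) M"
    unfolding M_def using assms(2) by (rule openin_continuous_map_preimage[OF continuous_map_mult])
  moreover have "{\<one>} \<times> A \<subseteq> M"
    using assms compactin_subset_topspace by (fastforce simp: M_def)
  ultimately obtain U V where "openin T U" "\<one> \<in> U" "A \<subseteq> V" "U \<times> V \<subseteq> M"
    using tube_lemma_right[OF _ assms(1)] by (metis one_closed topspace_eq)
  then show ?thesis
    using that by (fastforce simp: M_def)
qed

lemma compact_open_nbhd_contains_subgroup:
  assumes cA: "compactin T A" and oA: "openin T A" and "\<one> \<in> A"
  obtains K where "compact_open_subgroup G T K" "K \<subseteq> A"
proof -
  define K where "K = {g \<in> carrier G. \<forall>a\<in>A. g \<otimes> a \<in> A \<and> inv g \<otimes> a \<in> A}"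
  have "A \<subseteq> carrier G"
    using oA openin_subset by force
  then have K: "subgroup K G"
    unfolding K_def by (rule subgroup_left_stabilizer)
  obtain U where oU: "openin T U" and "\<one> \<in> U" and UA: "\<And>u a. u \<in> U \<Longrightarrow> a \<in> A \<Longrightarrow> u \<otimes> a \<in> A"
    using nbhd_one_mult_subset[OF cA oA] by blast
  define V where "V = U \<inter> {g \<in> topspace T. inv g \<in> U}"
  have "openin T V"
    unfolding V_def using oU by (intro openin_Int openin_continuous_map_preimage[OF continuous_map_inv])
  moreover have "\<one> \<in> V" "V \<subseteq> K"
    using \<open>\<one> \<in> U\<close> UA by (auto simp: V_def K_def)
  ultimately have "openin T K"
    using K subgroup_openin_if_nbhd by blast
  moreover have "K \<subseteq> A"
    using \<open>\<one> \<in> A\<close> by (force simp: K_def)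
  moreover have "compactin T K"
    using closed_compactin[OF cA \<open>K \<subseteq> A\<close> open_subgroup_closedin[OF K \<open>openin T K\<close>]] .
  ultimately show ?thesis
    using that K by (simp add: compact_open_subgroup_def)
qed

end

locale tdlc_group = topgroup +
  assumes Hausdorff: "Hausdorff_space T"
    and locally_compact: "locally_compact_space T"
    and totally_disconnected: "totally_disconnected_space T"
begin

lemma van_Dantzig:
  assumes "openin T W" "\<one> \<in> W"
  obtains K where "compact_open_subgroup G T K" "K \<subseteq> W"
proof -
  obtain A where "openin T A" "compactin T A" "\<one> \<in> A" "A \<subseteq> W"
    using totally_disconnected_compact_open_nbhd[OF Hausdorff locally_compact totally_disconnected assms] .
  then show ?thesis
    using compact_open_nbhd_contains_subgroup that by (metis subset_trans)
qed

end

section \<open>Sampling finite-dimensional spaces of functions\<close>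

definition fun_span :: "nat \<Rightarrow> (nat \<Rightarrow> 'a \<Rightarrow> complex) \<Rightarrow> 'a set \<Rightarrow> ('a \<Rightarrow> complex) set" where
  "fun_span n \<phi> H = {w. \<exists>a. \<forall>h\<in>H. w h = (\<Sum>i<n. a i * \<phi> i h)}"

definition sample_norm :: "'a set \<Rightarrow> ('a \<Rightarrow> complex) \<Rightarrow> real" where
  "sample_norm P w = (\<Sum>p\<in>P. cmod (w p))"

text \<open>Equivalence of norms on the finite-dimensional space \<open>fun_span n \<phi> H\<close>: the values at the
  sample points \<open>P\<close> bound the coefficients of some representation.\<close>

definition samples_control :: "nat \<Rightarrow> (nat \<Rightarrow> 'a \<Rightarrow> complex) \<Rightarrow> 'a set \<Rightarrow> 'a set \<Rightarrow> real \<Rightarrow> bool" where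
  "samples_control n \<phi> H P C \<longleftrightarrow>
     (\<forall>a. \<exists>a'. (\<forall>h\<in>H. (\<Sum>i<n. a' i * \<phi> i h) = (\<Sum>i<n. a i * \<phi> i h)) \<and>
        (\<Sum>i<n. cmod (a' i)) \<le> C * sample_norm P (\<lambda>h. \<Sum>i<n. a i * \<phi> i h))"

definition samples_interpolate :: "nat \<Rightarrow> (nat \<Rightarrow> 'a \<Rightarrow> complex) \<Rightarrow> 'a set \<Rightarrow> bool" where
  "samples_interpolate n \<phi> P \<longleftrightarrow> (\<forall>t. \<exists>a. \<forall>p\<in>P. (\<Sum>i<n. a i * \<phi> i p) = t p)"

lemma sample_norm_nonneg: "sample_norm P w \<ge> 0"
  by (simp add: sample_norm_def sum_nonneg)

lemma fun_span_cong:
  assumes "v \<in> fun_span n \<phi> H" and "\<And>h. h \<in> H \<Longrightarrow> u h = v h"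
  shows "u \<in> fun_span n \<phi> H"
  using assms by (auto simp: fun_span_def)

lemma fun_span_diff:
  assumes "u \<in> fun_span n \<phi> H" "v \<in> fun_span n \<phi> H"
  shows "(\<lambda>h. u h - v h) \<in> fun_span n \<phi> H"
proof -
  obtain a b where "\<forall>h\<in>H. u h = (\<Sum>i<n. a i * \<phi> i h)" "\<forall>h\<in>H. v h = (\<Sum>i<n. b i * \<phi> i h)"
    using assms by (auto simp: fun_span_def)
  then have "\<forall>h\<in>H. u h - v h = (\<Sum>i<n. (a i - b i) * \<phi> i h)"
    by (simp add: algebra_simps sum_subtractf)
  then show ?thesis
    by (auto simp: fun_span_def)
qed

lemma norm_sum_mult_le:
  fixes c d :: "nat \<Rightarrow> complex"
  shows "cmod (\<Sum>i<n. c i * d i) \<le> (\<Sum>i<n. cmod (c i)) * (\<Sum>i<n. cmod (d i))"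
proof -
  have "cmod (\<Sum>i<n. c i * d i) \<le> (\<Sum>i<n. cmod (c i) * cmod (d i))"
    by (rule order_trans[OF norm_sum]) (simp add: norm_mult)
  also have "\<dots> \<le> (\<Sum>i<n. cmod (c i) * (\<Sum>j<n. cmod (d j)))"
    by (intro sum_mono mult_left_mono) (auto intro: member_le_sum)
  also have "\<dots> = (\<Sum>i<n. cmod (c i)) * (\<Sum>i<n. cmod (d i))"
    by (simp add: sum_distrib_right)
  finally show ?thesis .
qed

lemma samples_interpolate_Suc:
  assumes "samples_interpolate n \<phi> P"
  shows "samples_interpolate (Suc n) \<phi> P"
  unfolding samples_interpolate_def
proof
  fix t
  obtain a where "\<forall>p\<in>P. (\<Sum>i<n. a i * \<phi> i p) = t p"
    using assms by (auto simp: samples_interpolate_def)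
  then show "\<exists>a. \<forall>p\<in>P. (\<Sum>i<Suc n. a i * \<phi> i p) = t p"
    by (intro exI[of _ "a(n := 0)"]) simp
qed

lemma samples_interpolate_insert:
  assumes "samples_interpolate n \<phi> P"
    and b: "\<forall>p\<in>P. \<phi> n p = (\<Sum>i<n. b i * \<phi> i p)" and \<delta>: "\<phi> n q \<noteq> (\<Sum>i<n. b i * \<phi> i q)"
  shows "samples_interpolate (Suc n) \<phi> (insert q P)"
  unfolding samples_interpolate_def
proof
  fix t
  obtain a where a: "\<forall>p\<in>P. (\<Sum>i<n. a i * \<phi> i p) = t p"
    using assms(1) unfolding samples_interpolate_def by blast
  define \<alpha> where "\<alpha> = (t q - (\<Sum>i<n. a i * \<phi> i q)) / (\<phi> n q - (\<Sum>i<n. b i * \<phi> i q))"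
  define a' where "a' i = (if i < n then a i - \<alpha> * b i else \<alpha>)" for i
  have a': "(\<Sum>i<Suc n. a' i * \<phi> i h) =
      (\<Sum>i<n. a i * \<phi> i h) + \<alpha> * (\<phi> n h - (\<Sum>i<n. b i * \<phi> i h))" for h
    by (simp add: a'_def algebra_simps sum_subtractf sum_distrib_left)
  have "(\<Sum>i<Suc n. a' i * \<phi> i q) = t q"
    using \<delta> unfolding a' by (simp add: \<alpha>_def)
  moreover have "(\<Sum>i<Suc n. a' i * \<phi> i p) = t p" if "p \<in> P" for p
    using a b that unfolding a' by simp
  ultimately show "\<exists>a. \<forall>p\<in>insert q P. (\<Sum>i<Suc n. a i * \<phi> i p) = t p"
    by blast
qed

lemma samples_control_drop_last:
  assumes ctrl: "samples_control n \<phi> H P C" and b: "\<forall>p\<in>P. \<phi> n p = (\<Sum>i<n. b i * \<phi> i p)"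
  obtains c' where
    "\<forall>h\<in>H. (\<Sum>i<n. c' i * \<phi> i h) = (\<Sum>i<Suc n. a i * \<phi> i h) - a n * (\<phi> n h - (\<Sum>i<n. b i * \<phi> i h))"
    "(\<Sum>i<n. cmod (c' i)) \<le> C * sample_norm P (\<lambda>h. \<Sum>i<Suc n. a i * \<phi> i h)"
proof -
  define c where "c i = a i + a n * b i" for i
  have c: "(\<Sum>i<n. c i * \<phi> i h) = (\<Sum>i<Suc n. a i * \<phi> i h) - a n * (\<phi> n h - (\<Sum>i<n. b i * \<phi> i h))" for h
    by (simp add: c_def algebra_simps sum.distrib sum_distrib_left)
  obtain c' where "\<forall>h\<in>H. (\<Sum>i<n. c' i * \<phi> i h) = (\<Sum>i<n. c i * \<phi> i h)"
    and "(\<Sum>i<n. cmod (c' i)) \<le> C * sample_norm P (\<lambda>h. \<Sum>i<n. c i * \<phi> i h)"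
    using ctrl unfolding samples_control_def by blast
  moreover have "sample_norm P (\<lambda>h. \<Sum>i<n. c i * \<phi> i h) = sample_norm P (\<lambda>h. \<Sum>i<Suc n. a i * \<phi> i h)"
    unfolding sample_norm_def using b by (intro sum.cong) (auto simp: c)
  ultimately show ?thesis
    using that[of c'] by (simp add: c)
qed

lemma samples_control_Suc:
  assumes ctrl: "samples_control n \<phi> H P C" and b: "\<forall>h\<in>H. \<phi> n h = (\<Sum>i<n. b i * \<phi> i h)"
    and "P \<subseteq> H"
  shows "samples_control (Suc n) \<phi> H P C"
  unfolding samples_control_def
proof
  fix a
  have "\<forall>p\<in>P. \<phi> n p = (\<Sum>i<n. b i * \<phi> i p)"
    using b \<open>P \<subseteq> H\<close> by blast
  then obtain c' where
    "\<forall>h\<in>H. (\<Sum>i<n. c' i * \<phi> i h) = (\<Sum>i<Suc n. a i * \<phi> i h) - a n * (\<phi> n h - (\<Sum>i<n. b i * \<phi> i h))"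
    "(\<Sum>i<n. cmod (c' i)) \<le> C * sample_norm P (\<lambda>h. \<Sum>i<Suc n. a i * \<phi> i h)"
    by (rule samples_control_drop_last[OF ctrl])
  then show "\<exists>a'. (\<forall>h\<in>H. (\<Sum>i<Suc n. a' i * \<phi> i h) = (\<Sum>i<Suc n. a i * \<phi> i h)) \<and>
      (\<Sum>i<Suc n. cmod (a' i)) \<le> C * sample_norm P (\<lambda>h. \<Sum>i<Suc n. a i * \<phi> i h)"
    using b by (intro exI[of _ "c'(n := 0)"]) simp
qed

lemma samples_control_insert:
  assumes "finite P" and "C \<ge> 0" and ctrl: "samples_control n \<phi> H P C"
    and b: "\<forall>p\<in>P. \<phi> n p = (\<Sum>i<n. b i * \<phi> i p)"
    and "q \<in> H" and \<delta>: "\<phi> n q \<noteq> (\<Sum>i<n. b i * \<phi> i q)"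
  shows "\<exists>C'\<ge>0. samples_control (Suc n) \<phi> H (insert q P) C'"
proof -
  define \<delta> where "\<delta> = \<phi> n q - (\<Sum>i<n. b i * \<phi> i q)"
  define \<Phi> where "\<Phi> = (\<Sum>i<n. cmod (\<phi> i q))"
  define B where "B = (\<Sum>i<n. cmod (b i))"
  define E where "E = (B + 1) / cmod \<delta>"
  have "\<Phi> \<ge> 0" "B \<ge> 0" "E \<ge> 0"
    by (auto simp: \<Phi>_def B_def E_def sum_nonneg)
  have "q \<notin> P"
    using b \<delta> by auto
  have "samples_control (Suc n) \<phi> H (insert q P) (C + E * (1 + C * \<Phi>))"
    unfolding samples_control_def
  proof
    fix a
    define w where "w h = (\<Sum>i<Suc n. a i * \<phi> i h)" for h
    define S where "S = sample_norm P w"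
    obtain c' where c'1: "\<forall>h\<in>H. (\<Sum>i<n. c' i * \<phi> i h) = w h - a n * (\<phi> n h - (\<Sum>i<n. b i * \<phi> i h))"
      and c'2: "(\<Sum>i<n. cmod (c' i)) \<le> C * S"
      unfolding w_def S_def by (rule samples_control_drop_last[OF ctrl b])
    have "a n * \<delta> = w q - (\<Sum>i<n. c' i * \<phi> i q)"
      using c'1 \<open>q \<in> H\<close> by (simp add: \<delta>_def)
    then have "cmod (a n * \<delta>) \<le> cmod (w q) + cmod (\<Sum>i<n. c' i * \<phi> i q)"
      by (simp add: norm_triangle_ineq4)
    also have "\<dots> \<le> cmod (w q) + (\<Sum>i<n. cmod (c' i)) * \<Phi>"
      using norm_sum_mult_le[of c' "\<lambda>i. \<phi> i q" n] by (simp add: \<Phi>_def)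
    also have "\<dots> \<le> cmod (w q) + C * S * \<Phi>"
      using c'2 \<open>\<Phi> \<ge> 0\<close> by (simp add: mult_right_mono)
    finally have "cmod (a n) \<le> (cmod (w q) + C * \<Phi> * S) / cmod \<delta>"
      using \<delta> by (simp add: \<delta>_def norm_mult pos_le_divide_eq ac_simps)
    then have "(B + 1) * cmod (a n) \<le> (B + 1) * ((cmod (w q) + C * \<Phi> * S) / cmod \<delta>)"
      using \<open>B \<ge> 0\<close> by (intro mult_left_mono) auto
    then have an: "cmod (a n) * (B + 1) \<le> E * (cmod (w q) + C * \<Phi> * S)"
      by (simp add: E_def ac_simps)
    define a' where "a' i = (if i < n then c' i - a n * b i else a n)" for i
    have "(\<Sum>i<Suc n. a' i * \<phi> i h) = w h" if "h \<in> H" for h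
      using c'1 that by (simp add: a'_def algebra_simps sum_subtractf sum_distrib_left)
    moreover have "(\<Sum>i<Suc n. cmod (a' i)) \<le> (\<Sum>i<n. cmod (c' i)) + cmod (a n) * (B + 1)"
    proof -
      have "(\<Sum>i<n. cmod (c' i - a n * b i)) \<le> (\<Sum>i<n. cmod (c' i) + cmod (a n) * cmod (b i))"
        by (intro sum_mono) (metis norm_mult norm_triangle_ineq4)
      then show ?thesis
        by (simp add: a'_def B_def sum.distrib sum_distrib_left algebra_simps)
    qed
    moreover have "C * S + E * (cmod (w q) + C * \<Phi> * S) \<le> (C + E * (1 + C * \<Phi>)) * (cmod (w q) + S)"
    proof -
      have "0 \<le> C * cmod (w q) + E * C * \<Phi> * cmod (w q) + E * S"
        using \<open>C \<ge> 0\<close> \<open>E \<ge> 0\<close> \<open>\<Phi> \<ge> 0\<close> sample_norm_nonneg[of P w] by (simp add: S_def)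
      then show ?thesis
        by (simp add: algebra_simps)
    qed
    moreover have "sample_norm (insert q P) w = cmod (w q) + S"
      using \<open>finite P\<close> \<open>q \<notin> P\<close> by (simp add: S_def sample_norm_def)
    ultimately show "\<exists>a'. (\<forall>h\<in>H. (\<Sum>i<Suc n. a' i * \<phi> i h) = (\<Sum>i<Suc n. a i * \<phi> i h)) \<and>
        (\<Sum>i<Suc n. cmod (a' i)) \<le> (C + E * (1 + C * \<Phi>)) * sample_norm (insert q P) (\<lambda>h. \<Sum>i<Suc n. a i * \<phi> i h)"
      using c'2 an unfolding w_def by (intro exI[of _ a']) auto
  qed
  moreover have "C + E * (1 + C * \<Phi>) \<ge> 0"
    using \<open>C \<ge> 0\<close> \<open>E \<ge> 0\<close> \<open>\<Phi> \<ge> 0\<close> by simp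
  ultimately show ?thesis
    by blast
qed

lemma exists_controlling_samples:
  "\<exists>P C. finite P \<and> P \<subseteq> H \<and> C \<ge> 0 \<and> samples_control n \<phi> H P C \<and> samples_interpolate n \<phi> P"
proof (induction n)
  case 0
  show ?case
    by (rule exI[of _ "{}"], rule exI[of _ 0]) (simp add: samples_control_def samples_interpolate_def)
next
  case (Suc n)
  then obtain P C where P: "finite P" "P \<subseteq> H" "C \<ge> 0"
    and ctrl: "samples_control n \<phi> H P C" and interp: "samples_interpolate n \<phi> P"
    by blast
  show ?case
  proof (cases "\<exists>b. \<forall>h\<in>H. \<phi> n h = (\<Sum>i<n. b i * \<phi> i h)")
    case True
    then obtain b where "\<forall>h\<in>H. \<phi> n h = (\<Sum>i<n. b i * \<phi> i h)"
      by blast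
    then have "samples_control (Suc n) \<phi> H P C"
      using ctrl P(2) samples_control_Suc by blast
    moreover have "samples_interpolate (Suc n) \<phi> P"
      using interp by (rule samples_interpolate_Suc)
    ultimately show ?thesis
      using P by blast
  next
    case False
    obtain b where b: "\<forall>p\<in>P. \<phi> n p = (\<Sum>i<n. b i * \<phi> i p)"
      using interp[unfolded samples_interpolate_def, rule_format, of "\<phi> n"] by (metis (no_types))
    then obtain q where q: "q \<in> H" "\<phi> n q \<noteq> (\<Sum>i<n. b i * \<phi> i q)"
      using False by blast
    then obtain C' where "C' \<ge> 0" "samples_control (Suc n) \<phi> H (insert q P) C'"
      using samples_control_insert[OF P(1,3) ctrl b] by blast
    moreover have "samples_interpolate (Suc n) \<phi> (insert q P)"
      using interp b q(2) by (rule samples_interpolate_insert)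
    ultimately show ?thesis
      using P q(1) by (intro exI[of _ "insert q P"] exI[of _ C']) simp
  qed
qed

lemma sample_norm_translate_le:
  assumes ctrl: "samples_control n \<phi> H P C" and w: "w \<in> fun_span n \<phi> H"
    and "P \<subseteq> H" "t ` P \<subseteq> H"
  shows "sample_norm P (\<lambda>h. w (t h) - w h) \<le>
    C * sample_norm P w * (\<Sum>i<n. sample_norm P (\<lambda>p. \<phi> i (t p) - \<phi> i p))"
proof -
  obtain a where a: "\<forall>h\<in>H. w h = (\<Sum>i<n. a i * \<phi> i h)"
    using w by (auto simp: fun_span_def)
  obtain a' where "\<forall>h\<in>H. (\<Sum>i<n. a' i * \<phi> i h) = (\<Sum>i<n. a i * \<phi> i h)"
    and "(\<Sum>i<n. cmod (a' i)) \<le> C * sample_norm P (\<lambda>h. \<Sum>i<n. a i * \<phi> i h)"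
    using ctrl unfolding samples_control_def by blast
  moreover have "sample_norm P (\<lambda>h. \<Sum>i<n. a i * \<phi> i h) = sample_norm P w"
    unfolding sample_norm_def using a \<open>P \<subseteq> H\<close> by (intro sum.cong) auto
  ultimately have a'1: "\<forall>h\<in>H. (\<Sum>i<n. a' i * \<phi> i h) = w h"
    and a'2: "(\<Sum>i<n. cmod (a' i)) \<le> C * sample_norm P w"
    using a by auto
  have "cmod (w (t p) - w p) \<le> (\<Sum>i<n. cmod (a' i)) * (\<Sum>i<n. cmod (\<phi> i (t p) - \<phi> i p))"
    if "p \<in> P" for p
  proof -
    have "t p \<in> H" "p \<in> H"
      using that assms(3,4) by auto
    then have "w (t p) - w p = (\<Sum>i<n. a' i * \<phi> i (t p)) - (\<Sum>i<n. a' i * \<phi> i p)"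
      using a'1 by simp
    also have "\<dots> = (\<Sum>i<n. a' i * (\<phi> i (t p) - \<phi> i p))"
      by (simp add: algebra_simps sum_subtractf)
    finally show ?thesis
      using norm_sum_mult_le[of a' "\<lambda>i. \<phi> i (t p) - \<phi> i p" n] by simp
  qed
  then have "sample_norm P (\<lambda>h. w (t h) - w h) \<le>
      (\<Sum>p\<in>P. (\<Sum>i<n. cmod (a' i)) * (\<Sum>i<n. cmod (\<phi> i (t p) - \<phi> i p)))"
    unfolding sample_norm_def by (rule sum_mono)
  also have "\<dots> = (\<Sum>i<n. cmod (a' i)) * (\<Sum>i<n. sample_norm P (\<lambda>p. \<phi> i (t p) - \<phi> i p))"
    unfolding sample_norm_def by (simp add: sum_distrib_left sum.swap[of _ P])
  also have "\<dots> \<le> C * sample_norm P w * (\<Sum>i<n. sample_norm P (\<lambda>p. \<phi> i (t p) - \<phi> i p))"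
    using a'2 by (intro mult_right_mono) (auto intro: sum_nonneg sample_norm_nonneg)
  finally show ?thesis .
qed

lemma samples_control_eq_0:
  assumes ctrl: "samples_control n \<phi> H P C" and w: "w \<in> fun_span n \<phi> H"
    and "P \<subseteq> H" and "sample_norm P w = 0" and "h \<in> H"
  shows "w h = 0"
proof -
  obtain a where a: "\<forall>h\<in>H. w h = (\<Sum>i<n. a i * \<phi> i h)"
    using w by (auto simp: fun_span_def)
  obtain a' where "\<forall>h\<in>H. (\<Sum>i<n. a' i * \<phi> i h) = (\<Sum>i<n. a i * \<phi> i h)"
    and "(\<Sum>i<n. cmod (a' i)) \<le> C * sample_norm P (\<lambda>h. \<Sum>i<n. a i * \<phi> i h)"
    using ctrl unfolding samples_control_def by blast
  moreover have "sample_norm P (\<lambda>h. \<Sum>i<n. a i * \<phi> i h) = sample_norm P w"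
    unfolding sample_norm_def using a \<open>P \<subseteq> H\<close> by (intro sum.cong) auto
  ultimately have a'1: "\<forall>h\<in>H. (\<Sum>i<n. a' i * \<phi> i h) = w h"
    and a'2: "(\<Sum>i<n. cmod (a' i)) \<le> 0"
    using a \<open>sample_norm P w = 0\<close> by auto
  then have "\<forall>i<n. a' i = 0"
    using sum_nonneg_eq_0_iff[of "{..<n}" "\<lambda>i. cmod (a' i)"] by (simp add: order_antisym sum_nonneg)
  then show ?thesis
    using a'1 \<open>h \<in> H\<close> by auto
qed

section \<open>No small subgroups\<close>

lemma bounded_geometric_growth_eq_0:
  fixes d :: "nat \<Rightarrow> real"
  assumes bounded: "\<And>j. d j \<le> B" and growth: "\<And>j. r * d j \<le> d (Suc j)"
    and "r > 1" and "d 0 \<ge> 0"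
  shows "d 0 = 0"
proof (rule ccontr)
  assume "d 0 \<noteq> 0"
  then have "d 0 > 0"
    using \<open>d 0 \<ge> 0\<close> by simp
  have lower: "r ^ j * d 0 \<le> d j" for j
  proof (induction j)
    case (Suc j)
    have "r ^ Suc j * d 0 = r * (r ^ j * d 0)"
      by simp
    also have "\<dots> \<le> r * d j"
      using Suc \<open>r > 1\<close> by (intro mult_left_mono) auto
    also have "\<dots> \<le> d (Suc j)"
      by (rule growth)
    finally show ?case .
  qed simp
  obtain j where "B / d 0 < r ^ j"
    using real_arch_pow[OF \<open>r > 1\<close>] by blast
  then have "B < r ^ j * d 0"
    using \<open>d 0 > 0\<close> by (simp add: pos_divide_less_eq)
  then show False
    using lower[of j] bounded[of j] by simp
qed

lemma (in group) small_translations_trivial: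
  fixes V :: "('a \<Rightarrow> complex) set"
  assumes K: "subgroup K G" and P: "P \<subseteq> carrier G"
    and small: "\<And>v k. v \<in> V \<Longrightarrow> k \<in> K \<Longrightarrow>
      sample_norm P (\<lambda>h. v (k \<otimes> h) - v h) \<le> sample_norm P v / 4"
    and w: "w \<in> V" and diff: "\<And>k. k \<in> K \<Longrightarrow> (\<lambda>h. w (k \<otimes> h) - w h) \<in> V"
    and "k \<in> K"
  shows "sample_norm P (\<lambda>h. w (k \<otimes> h) - w h) = 0"
proof -
  define kk where "kk j = ((\<lambda>x. x \<otimes> x) ^^ j) k" for j
  have kk_Suc: "kk (Suc j) = kk j \<otimes> kk j" for j
    by (simp add: kk_def)
  have kkK: "kk j \<in> K" for j
    by (induction j) (use \<open>k \<in> K\<close> K in \<open>auto simp: kk_def subgroup.m_closed\<close>)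
  have kkG: "kk j \<in> carrier G" for j
    using subgroup.mem_carrier[OF K kkK] .
  define d where "d j = sample_norm P (\<lambda>h. w (kk j \<otimes> h) - w h)" for j
  have "7/4 * d j \<le> d (Suc j)" for j
  proof -
    define u where "u h = w (kk j \<otimes> h) - w h" for h
    \<comment> \<open>Translating by \<open>kk j\<close> twice doubles the displacement, up to the small error \<open>u (kk j \<otimes> h) - u h\<close>.\<close>
    have "w (kk (Suc j) \<otimes> p) - w p = 2 * u p + (u (kk j \<otimes> p) - u p)" if "p \<in> P" for p
    proof -
      have "kk (Suc j) \<otimes> p = kk j \<otimes> (kk j \<otimes> p)"
        using kkG P that by (simp add: kk_Suc m_assoc subsetD)
      then show ?thesis
        by (simp add: u_def algebra_simps)
    qed
    then have "2 * cmod (u p) \<le> cmod (w (kk (Suc j) \<otimes> p) - w p) + cmod (u (kk j \<otimes> p) - u p)"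
      if "p \<in> P" for p
      using that norm_triangle_ineq4[of "w (kk (Suc j) \<otimes> p) - w p" "u (kk j \<otimes> p) - u p"]
      by (simp add: norm_mult)
    then have "(\<Sum>p\<in>P. 2 * cmod (u p)) \<le>
        (\<Sum>p\<in>P. cmod (w (kk (Suc j) \<otimes> p) - w p) + cmod (u (kk j \<otimes> p) - u p))"
      by (rule sum_mono)
    then have "2 * d j \<le> d (Suc j) + sample_norm P (\<lambda>h. u (kk j \<otimes> h) - u h)"
      unfolding d_def sample_norm_def u_def by (simp only: sum_distrib_left[symmetric] sum.distrib)
    moreover have "sample_norm P (\<lambda>h. u (kk j \<otimes> h) - u h) \<le> d j / 4"
      using small[OF diff[OF kkK[of j]] kkK[of j]] unfolding d_def u_def .
    ultimately show ?thesis
      by simp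
  qed
  moreover have "d j \<le> sample_norm P w / 4" for j
    unfolding d_def using small[OF w kkK] .
  ultimately have "d 0 = 0"
    using bounded_geometric_growth_eq_0[of d "sample_norm P w / 4" "7/4"] by (simp add: d_def sample_norm_nonneg)
  then show ?thesis
    by (simp add: d_def kk_def)
qed

section \<open>Smooth functions and the class \<open>\<P>(G)\<close>\<close>

lemma CcI:
  assumes "Hausdorff_space T" and "continuous_map T euclidean f"
    and "compactin T S" and "\<And>x. x \<notin> S \<Longrightarrow> f x = 0"
  shows "f \<in> Cc T"
proof -
  have "T closure_of {x \<in> topspace T. f x \<noteq> 0} \<subseteq> S"
    using assms by (intro closure_of_minimal compactin_imp_closedin) auto
  then have "compactin T (T closure_of {x \<in> topspace T. f x \<noteq> 0})"
    by (rule closed_compactin[OF \<open>compactin T S\<close> _ closedin_closure_of])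
  moreover have "f x = 0" if "x \<notin> topspace T" for x
    using assms(3,4) compactin_subset_topspace that by blast
  ultimately show ?thesis
    using assms(2) by (simp add: Cc_def)
qed

lemma smooth_functions_sum_indicators:
  assumes "finite A" and "\<And>a. a \<in> A \<Longrightarrow> x a \<in> carrier G \<and> compact_open_subgroup G T (H a)"
  shows "(\<lambda>g. \<Sum>a\<in>A. c a * indicator (x a <#\<^bsub>G\<^esub> H a) g) \<in> smooth_functions G T"
proof -
  obtain e where e: "bij_betw e {..<card A} A"
    using ex_bij_betw_nat_finite[OF \<open>finite A\<close>] by (auto simp: atLeast0LessThan)
  then have "(\<Sum>a\<in>A. c a * indicator (x a <#\<^bsub>G\<^esub> H a) y) =
      (\<Sum>i<card A. c (e i) * indicator (x (e i) <#\<^bsub>G\<^esub> H (e i)) y)" for y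
    using sum.reindex_bij_betw[OF e, where g = "\<lambda>a. c a * indicator (x a <#\<^bsub>G\<^esub> H a) y"] by simp
  moreover have "\<forall>i<card A. x (e i) \<in> carrier G \<and> compact_open_subgroup G T (H (e i))"
    using e assms(2) bij_betwE by blast
  ultimately show ?thesis
    unfolding smooth_functions_def
    by (intro CollectI exI[of _ "card A"] exI[of _ "c \<circ> e"] exI[of _ "x \<circ> e"] exI[of _ "H \<circ> e"]) auto
qed

definition right_invariant :: "('a, 'b) monoid_scheme \<Rightarrow> 'a set \<Rightarrow> ('a \<Rightarrow> 'c) \<Rightarrow> bool" where
  "right_invariant G K f \<longleftrightarrow> (\<forall>x\<in>carrier G. \<forall>k\<in>K. f (x \<otimes>\<^bsub>G\<^esub> k) = f x)"

context topgroup
begin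

lemma l_coset_mult_right_iff:
  assumes "subgroup H G" "x \<in> carrier G" "y \<in> carrier G" "h \<in> H"
  shows "y \<otimes> h \<in> x <# H \<longleftrightarrow> y \<in> x <# H"
proof -
  have "y \<otimes> h \<in> y <# H"
    using assms(4) unfolding l_coset_def by blast
  moreover have "y = y \<otimes> h \<otimes> inv h"
    using assms by (simp add: m_assoc subgroup.mem_carrier)
  then have "y \<in> (y \<otimes> h) <# H"
    using assms(1,4) subgroup.m_inv_closed unfolding l_coset_def by fastforce
  ultimately show ?thesis
    using assms l_repr_independence subgroup.mem_carrier by (metis m_closed)
qed

lemma continuous_map_if_right_invariant:
  assumes "subgroup H G" "openin T H" and inv: "right_invariant G H f"
  shows "continuous_map T euclidean f"
  unfolding continuous_map
proof (intro conjI allI impI)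
  fix U
  show "openin T {x \<in> topspace T. f x \<in> U}"
  proof (subst openin_subopen, intro ballI)
    fix x
    assume x: "x \<in> {x \<in> topspace T. f x \<in> U}"
    have "x <# H \<subseteq> {x \<in> topspace T. f x \<in> U}"
    proof
      fix y
      assume "y \<in> x <# H"
      then obtain h where "h \<in> H" "y = x \<otimes> h"
        unfolding l_coset_def by blast
      moreover have "h \<in> carrier G"
        using subgroup.mem_carrier[OF assms(1) \<open>h \<in> H\<close>] .
      ultimately show "y \<in> {x \<in> topspace T. f x \<in> U}"
        using x inv by (simp add: right_invariant_def)
    qed
    then show "\<exists>V. openin T V \<and> x \<in> V \<and> V \<subseteq> {x \<in> topspace T. f x \<in> U}"
      using x assms(1,2) by (intro exI[of _ "x <# H"]) (simp add: openin_l_coset lcos_self)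
  qed
qed auto

lemma compact_open_subgroup_Int:
  assumes "compact_open_subgroup G T H" "compact_open_subgroup G T K"
  shows "compact_open_subgroup G T (H \<inter> K)"
proof -
  have "closedin T H" "closedin T K"
    using assms open_subgroup_closedin by (auto simp: compact_open_subgroup_def)
  then have "compactin T (H \<inter> K)"
    using assms(1) closed_compactin[of T H "H \<inter> K"] by (simp add: compact_open_subgroup_def closedin_Int)
  then show ?thesis
    using assms by (auto simp: compact_open_subgroup_def subgroups_Inter_pair)
qed

end

lemma (in group) fun_span_translate_diff:
  assumes "subgroup H G" and span: "\<And>x. x \<in> carrier G \<Longrightarrow> (\<lambda>h. f (x \<otimes> h)) \<in> fun_span n \<phi> H"
    and x: "x \<in> carrier G" and k: "k \<in> carrier G"
  shows "(\<lambda>h. f (x \<otimes> (k \<otimes> h)) - f (x \<otimes> h)) \<in> fun_span n \<phi> H"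
proof -
  have "(\<lambda>h. f (x \<otimes> k \<otimes> h)) \<in> fun_span n \<phi> H"
    using span x k by simp
  moreover have "f (x \<otimes> (k \<otimes> h)) = f (x \<otimes> k \<otimes> h)" if "h \<in> H" for h
    using x k subgroup.mem_carrier[OF assms(1) that] by (simp add: m_assoc)
  ultimately have "(\<lambda>h. f (x \<otimes> (k \<otimes> h))) \<in> fun_span n \<phi> H"
    by (rule fun_span_cong)
  then show ?thesis
    using span[OF x] by (rule fun_span_diff)
qed

lemma (in group) right_invariant_eq_sum_cosets:
  fixes f :: "'a \<Rightarrow> 'c::semiring_1"
  assumes K: "subgroup K G" and inv: "right_invariant G K f" and "finite Cs"
    and rep: "\<And>C. C \<in> Cs \<Longrightarrow> rep C \<in> carrier G \<and> rep C <# K = C"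
    and vanish: "\<And>g. g \<notin> \<Union>Cs \<Longrightarrow> f g = 0"
  shows "f g = (\<Sum>C\<in>Cs. f (rep C) * indicator C g)"
proof (cases "g \<in> \<Union>Cs")
  case True
  then obtain C where "C \<in> Cs" "g \<in> C"
    by blast
  then obtain k where "k \<in> K" "g = rep C \<otimes> k"
    using rep unfolding l_coset_def by blast
  then have "f g = f (rep C)"
    using inv rep \<open>C \<in> Cs\<close> by (simp add: right_invariant_def)
  moreover have "Cs \<subseteq> lcosets K"
    using rep unfolding LCOSETS_def by force
  then have "disjoint_family_on (\<lambda>C. C) Cs"
    using lcos_disjoint[OF K] by (auto simp: disjoint_family_on_def)
  then have "(\<Sum>C'\<in>Cs. f (rep C') * indicator C' g) = f (rep C)"
    using \<open>g \<in> C\<close> \<open>finite Cs\<close> \<open>C \<in> Cs\<close>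
    by (rule sum_indicator_disjoint_family[where A = "\<lambda>C. C" and f = "\<lambda>C. f (rep C)"])
  ultimately show ?thesis
    by simp
next
  case False
  then show ?thesis
    using vanish by (simp add: indicator_def)
qed

context tdlc_group
begin

lemma compact_open_subgroup_below_all:
  fixes n :: nat
  assumes "\<And>i. i < n \<Longrightarrow> compact_open_subgroup G T (H i)"
  obtains K where "compact_open_subgroup G T K" "\<And>i. i < n \<Longrightarrow> K \<subseteq> H i"
proof -
  have "\<exists>K. compact_open_subgroup G T K \<and> (\<forall>i<n. K \<subseteq> H i)"
    using assms
  proof (induction n)
    case 0
    have "openin T (carrier G)"
      using openin_topspace[of T] by simp
    then obtain K where "compact_open_subgroup G T K"
      by (rule van_Dantzig) auto
    then show ?case
      by blast
  next
    case (Suc n)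
    then obtain K where "compact_open_subgroup G T K" "\<forall>i<n. K \<subseteq> H i"
      by auto
    then show ?case
      using Suc.prems compact_open_subgroup_Int[of K "H n"] less_Suc_eq
      by (intro exI[of _ "K \<inter> H n"]) auto
  qed
  then show ?thesis
    using that by blast
qed

lemma right_invariant_sum_indicators:
  fixes n :: nat and c :: "nat \<Rightarrow> complex"
  assumes "\<forall>i<n. x i \<in> carrier G \<and> compact_open_subgroup G T (H i)"
    and "\<And>i. i < n \<Longrightarrow> K \<subseteq> H i"
  shows "right_invariant G K (\<lambda>g. \<Sum>i<n. c i * indicator (x i <# H i) g)"
  unfolding right_invariant_def
proof (intro ballI sum.cong refl)
  fix y k i
  assume "y \<in> carrier G" "k \<in> K" "i \<in> {..<n}"
  then have "y \<otimes> k \<in> x i <# H i \<longleftrightarrow> y \<in> x i <# H i"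
    using assms by (intro l_coset_mult_right_iff) (auto simp: compact_open_subgroup_def)
  then show "c i * indicator (x i <# H i) (y \<otimes> k) = c i * indicator (x i <# H i) y"
    by (simp add: indicator_def)
qed

lemma smooth_functions_subset_P_functions:
  assumes "f \<in> smooth_functions G T"
  shows "f \<in> P_functions G T"
proof -
  obtain n :: nat and c x H where xH: "\<forall>i<n. x i \<in> carrier G \<and> compact_open_subgroup G T (H i)"
    and f: "f = (\<lambda>g. \<Sum>i<n. c i * indicator (x i <# H i) g)"
    using assms by (auto simp: smooth_functions_def)
  obtain K where K: "compact_open_subgroup G T K" and KH: "\<And>i. i < n \<Longrightarrow> K \<subseteq> H i"
    using compact_open_subgroup_below_all xH by metis
  have inv: "right_invariant G K f"
    unfolding f using xH KH by (rule right_invariant_sum_indicators)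
  then have "continuous_map T euclidean f"
    using K by (intro continuous_map_if_right_invariant) (auto simp: compact_open_subgroup_def)
  moreover have "compactin T (\<Union>i<n. x i <# H i)"
    using xH by (intro compactin_Union) (auto simp: compactin_l_coset compact_open_subgroup_def)
  moreover have "f g = 0" if "g \<notin> (\<Union>i<n. x i <# H i)" for g
    unfolding f using that by (intro sum.neutral) auto
  ultimately have "f \<in> Cc T"
    using Hausdorff CcI by blast
  \<comment> \<open>A single product term suffices: \<open>f (x \<otimes> h) = f x \<cdot> 1\<close> for \<open>h \<in> K\<close>.\<close>
  then show ?thesis
    unfolding P_functions_def using K inv
    by (intro CollectI conjI exI[of _ K] exI[of _ 1] exI[of _ "\<lambda>_. f"] exI[of _ "\<lambda>_ _. 1"])
      (auto simp: right_invariant_def)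
qed

lemma smooth_if_right_invariant:
  assumes f: "f \<in> Cc T" and K: "compact_open_subgroup G T K" and inv: "right_invariant G K f"
  shows "f \<in> smooth_functions G T"
proof -
  have sK: "subgroup K G"
    using K by (simp add: compact_open_subgroup_def)
  define S where "S = T closure_of {x \<in> topspace T. f x \<noteq> 0}"
  have "compactin T S"
    using f by (simp add: Cc_def S_def)
  then have "S \<subseteq> carrier G"
    using compactin_subset_topspace by fastforce
  have "\<exists>\<F>. finite \<F> \<and> \<F> \<subseteq> (\<lambda>x. x <# K) ` S \<and> S \<subseteq> \<Union>\<F>"
    using \<open>S \<subseteq> carrier G\<close> K sK lcos_self
    by (intro compactinD[OF \<open>compactin T S\<close>]) (auto simp: openin_l_coset compact_open_subgroup_def)
  then obtain F where "finite F" "F \<subseteq> S" and SF: "S \<subseteq> (\<Union>x\<in>F. x <# K)"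
    by (metis finite_subset_image)
  define Cs where "Cs = (\<lambda>x. x <# K) ` F"
  define rep where "rep = inv_into F (\<lambda>x. x <# K)"
  have rep: "rep C \<in> carrier G \<and> rep C <# K = C" if "C \<in> Cs" for C
  proof
    have "rep C \<in> F"
      using that unfolding Cs_def rep_def by (rule inv_into_into)
    then show "rep C \<in> carrier G"
      using \<open>F \<subseteq> S\<close> \<open>S \<subseteq> carrier G\<close> by blast
    show "rep C <# K = C"
      using that f_inv_into_f[of C "\<lambda>x. x <# K" F] by (simp add: Cs_def rep_def)
  qed
  have vanish: "f g = 0" if "g \<notin> \<Union>Cs" for g
  proof -
    have "g \<notin> S"
      using that SF by (auto simp: Cs_def)
    then show ?thesis
      using closure_of_subset[of "{x \<in> topspace T. f x \<noteq> 0}" T] f by (auto simp: S_def Cc_def)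
  qed
  have "finite Cs"
    using \<open>finite F\<close> by (simp add: Cs_def)
  have "f = (\<lambda>g. \<Sum>C\<in>Cs. f (rep C) * indicator (rep C <# K) g)"
  proof
    fix g
    have "f g = (\<Sum>C\<in>Cs. f (rep C) * indicator C g)"
      by (rule right_invariant_eq_sum_cosets[OF sK inv \<open>finite Cs\<close> rep vanish])
    also have "\<dots> = (\<Sum>C\<in>Cs. f (rep C) * indicator (rep C <# K) g)"
      using rep by (intro sum.cong refl) simp
    finally show "f g = (\<Sum>C\<in>Cs. f (rep C) * indicator (rep C <# K) g)" .
  qed
  moreover have "(\<lambda>g. \<Sum>C\<in>Cs. f (rep C) * indicator (rep C <# K) g) \<in> smooth_functions G T"
    using \<open>finite Cs\<close> rep K by (intro smooth_functions_sum_indicators) auto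
  ultimately show ?thesis
    by simp
qed

lemma small_translation_subgroup:
  fixes n :: nat and \<phi> :: "nat \<Rightarrow> 'a \<Rightarrow> complex" and C :: real
  assumes H: "compact_open_subgroup G T H"
    and cont: "\<And>i. i < n \<Longrightarrow> continuous_map (subtopology T H) euclidean (\<phi> i)"
    and "finite P" "P \<subseteq> H"
  obtains K where "compact_open_subgroup G T K" "K \<subseteq> H"
    "\<forall>k\<in>K. C * (\<Sum>i<n. sample_norm P (\<lambda>p. \<phi> i (k \<otimes> p) - \<phi> i p)) \<le> 1/4"
proof -
  have sH: "subgroup H G" and oH: "openin T H"
    using H by (auto simp: compact_open_subgroup_def)
  define D where "D k = C * (\<Sum>i<n. sample_norm P (\<lambda>p. \<phi> i (k \<otimes> p) - \<phi> i p))" for k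
  have mult_p: "continuous_map (subtopology T H) (subtopology T H) (\<lambda>k. k \<otimes> p)" if "p \<in> H" for p
    unfolding continuous_map_in_subtopology
    using that sH subgroup.mem_carrier[OF sH] subgroup.m_closed[OF sH]
    by (auto intro: continuous_map_from_subtopology continuous_map_mult_right)
  have "continuous_map (subtopology T H) euclidean (\<lambda>k. \<phi> i (k \<otimes> p))" if "i < n" "p \<in> P" for i p
    using continuous_map_compose[OF mult_p cont[OF that(1)]] that(2) \<open>P \<subseteq> H\<close>
    by (auto simp: o_def)
  then have "continuous_map (subtopology T H) euclideanreal D"
    unfolding D_def sample_norm_def using cont \<open>finite P\<close> \<open>P \<subseteq> H\<close>
    by (intro continuous_map_real_mult_left continuous_map_sum continuous_map_norm continuous_map_diff) auto
  then have "openin (subtopology T H) {k \<in> topspace (subtopology T H). D k \<in> {..<1/4}}"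
    by (rule openin_continuous_map_preimage) simp
  moreover have "{k \<in> topspace (subtopology T H). D k \<in> {..<1/4}} = {k \<in> H. D k < 1/4}"
    using subgroup.subset[OF sH] by auto
  ultimately have "openin (subtopology T H) {k \<in> H. D k < 1/4}"
    by simp
  then have "openin T {k \<in> H. D k < 1/4}"
    using openin_open_subtopology[OF oH] by blast
  moreover have "D \<one> = 0"
    using \<open>P \<subseteq> H\<close> subgroup.mem_carrier[OF sH] by (simp add: D_def sample_norm_def subset_iff)
  then have "\<one> \<in> {k \<in> H. D k < 1/4}"
    using subgroup.one_closed[OF sH] by simp
  ultimately obtain K where K: "compact_open_subgroup G T K" and "K \<subseteq> {k \<in> H. D k < 1/4}"
    by (rule van_Dantzig)
  then have "K \<subseteq> H" and "\<forall>k\<in>K. D k \<le> 1/4"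
    by auto
  then show ?thesis
    using that[OF K] unfolding D_def by blast
qed

lemma right_invariant_if_translates_in_fun_span:
  fixes n :: nat and \<phi> :: "nat \<Rightarrow> 'a \<Rightarrow> complex"
  assumes H: "compact_open_subgroup G T H"
    and cont: "\<And>i. i < n \<Longrightarrow> continuous_map (subtopology T H) euclidean (\<phi> i)"
    and span: "\<And>x. x \<in> carrier G \<Longrightarrow> (\<lambda>h. f (x \<otimes> h)) \<in> fun_span n \<phi> H"
  obtains K where "compact_open_subgroup G T K" "right_invariant G K f"
proof -
  have sH: "subgroup H G"
    using H by (simp add: compact_open_subgroup_def)
  obtain P C where P: "finite P" "P \<subseteq> H" and ctrl: "samples_control n \<phi> H P C"
    using exists_controlling_samples[of H n \<phi>] by blast
  obtain K where K: "compact_open_subgroup G T K" and "K \<subseteq> H"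
    and small: "\<forall>k\<in>K. C * (\<Sum>i<n. sample_norm P (\<lambda>p. \<phi> i (k \<otimes> p) - \<phi> i p)) \<le> 1/4"
    by (rule small_translation_subgroup[where n = n and \<phi> = \<phi> and C = C, OF H cont P])
  have sK: "subgroup K G"
    using K by (simp add: compact_open_subgroup_def)
  have "P \<subseteq> carrier G"
    using P(2) subgroup.subset[OF sH] by blast
  have contraction: "sample_norm P (\<lambda>h. v (k \<otimes> h) - v h) \<le> sample_norm P v / 4"
    if "v \<in> fun_span n \<phi> H" "k \<in> K" for v k
  proof -
    have "k \<in> H"
      using \<open>K \<subseteq> H\<close> that(2) by blast
    then have "(\<lambda>p. k \<otimes> p) ` P \<subseteq> H"
      using P(2) subgroup.m_closed[OF sH] by auto
    then have "sample_norm P (\<lambda>h. v (k \<otimes> h) - v h) \<le>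
        C * sample_norm P v * (\<Sum>i<n. sample_norm P (\<lambda>p. \<phi> i (k \<otimes> p) - \<phi> i p))"
      using sample_norm_translate_le[OF ctrl that(1) P(2)] by blast
    also have "\<dots> = sample_norm P v * (C * (\<Sum>i<n. sample_norm P (\<lambda>p. \<phi> i (k \<otimes> p) - \<phi> i p)))"
      by (simp add: ac_simps)
    also have "\<dots> \<le> sample_norm P v * (1/4)"
      using small that(2) sample_norm_nonneg by (intro mult_left_mono) auto
    finally show ?thesis
      by simp
  qed
  have "right_invariant G K f"
    unfolding right_invariant_def
  proof (intro ballI)
    fix x k
    assume x: "x \<in> carrier G" and k: "k \<in> K"
    define w where "w h = f (x \<otimes> h)" for h
    have w: "w \<in> fun_span n \<phi> H"
      unfolding w_def by (rule span[OF x])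
    have diff: "(\<lambda>h. w (k' \<otimes> h) - w h) \<in> fun_span n \<phi> H" if "k' \<in> K" for k'
      unfolding w_def using fun_span_translate_diff[OF sH span x subgroup.mem_carrier[OF sK that]] .
    have "sample_norm P (\<lambda>h. w (k \<otimes> h) - w h) = 0"
      using small_translations_trivial[OF sK \<open>P \<subseteq> carrier G\<close> contraction w diff k] .
    then have "w (k \<otimes> \<one>) - w \<one> = 0"
      using samples_control_eq_0[OF ctrl diff[OF k] P(2)] subgroup.one_closed[OF sH] by blast
    then show "f (x \<otimes> k) = f x"
      using k x subgroup.mem_carrier[OF sK] by (simp add: w_def)
  qed
  then show ?thesis
    by (rule that[OF K])
qed

lemma right_invariant_if_P_function:
  assumes "f \<in> P_functions G T"
  obtains K where "compact_open_subgroup G T K" "right_invariant G K f"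
proof -
  obtain H n fs \<phi> where H: "compact_open_subgroup G T H"
    and cont: "\<forall>i<(n::nat). fs i \<in> Cc T \<and> continuous_map (subtopology T H) euclidean (\<phi> i)"
    and dec: "\<forall>x\<in>carrier G. \<forall>h\<in>H. f (x \<otimes> h) = (\<Sum>i<n. fs i x * \<phi> i h)"
    using assms by (auto simp: P_functions_def)
  have "\<And>i. i < n \<Longrightarrow> continuous_map (subtopology T H) euclidean (\<phi> i)"
    using cont by blast
  moreover have "(\<lambda>h. f (x \<otimes> h)) \<in> fun_span n \<phi> H" if "x \<in> carrier G" for x
    unfolding fun_span_def using dec that by (intro CollectI exI[of _ "\<lambda>i. fs i x"]) simp
  ultimately show ?thesis
    using that by (rule right_invariant_if_translates_in_fun_span[OF H])
qed

end

theorem theorem4p2: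
  fixes G :: "('a, 'b) monoid_scheme" and T :: "'a topology"
  assumes "locally_compact_group G T"
    and "totally_disconnected_space T"
  shows "smooth_functions G T = P_functions G T"
proof -
  have "tdlc_group G T"
    using assms unfolding tdlc_group_def tdlc_group_axioms_def topgroup_def topgroup_axioms_def
    by (auto simp: locally_compact_group_def topological_group_def)
  then interpret tdlc_group G T .
  show ?thesis
  proof
    show "smooth_functions G T \<subseteq> P_functions G T"
      using smooth_functions_subset_P_functions by blast
    show "P_functions G T \<subseteq> smooth_functions G T"
    proof
      fix f
      assume f: "f \<in> P_functions G T"
      then obtain K where "compact_open_subgroup G T K" "right_invariant G K f"
        by (rule right_invariant_if_P_function)
      moreover have "f \<in> Cc T"
        using f by (simp add: P_functions_def)
      ultimately show "f \<in> smooth_functions G T"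
        by (intro smooth_if_right_invariant)
    qed
  qed
qed

end
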